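(* Let $R$ be a semiring and $\theta$ a congruence on $R$. The following are equivalent: (1) $\theta$ is a $k$-congruence; (2) $R/\theta$ has a zero $0_\theta$ and $\theta\subseteq \kappa_{0_\theta}$; (3) $R/\theta$ has a zero $0_\theta$ and $\theta=\kappa_{0_\theta}$. (Here the zero $0_\theta$ of $R/\theta$ is a $\theta$-class, i.e. a subset of $R$, and it is an ideal of $R$.)
   Context: A semiring $(R,+,\cdot)$ is a set with two binary operations such that $(R,+)$ is a commutative semigroup, $(R,\cdot)$ is a semigroup, and multiplication distributes over addition from both sides; no additive neutral element or identity is assumed. An element $0$ of a semiring $S$ is a zero of $S$ if $0+s=s$ and $0s=s0=0$ for all $s\in S$. An ideal of $R$ is a nonempty subset $A\subseteq R$ with $a+b\in A$ and $ra,ar\in A$ for all $a,b\in A$, $r\in R$. A congruence on $R$ is an equivalence relation $\equiv$ such that $a\equiv b$ implies $a+c\equiv b+c$, $ac\equiv bc$, $ca\equiv cb$ for all $a,b,c\in R$; $R/\theta$ denotes the quotient semiring of $\theta$-classes with $[x]+[y]=[x+y]$, $[x][y]=[xy]$. For an ideal $A$ of $R$, $\kappa_A$ is the congruence on $R$ defined by $x\,\kappa_A\,y$ iff $x+a=y+b$ for some $a,b\in A$. A congruence $\theta$ on $R$ is a $k$-congruence if $\theta=\kappa_A$ for some ideal $A$ of $R$. Throughout, $|R|\geq 2$. *)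

theory Defs
  imports Main
begin

text \<open>Semirings without zero/identity: Isabelle's type class semiring
(commutative additive semigroup, multiplicative semigroup, two-sided distributivity).\<close>

definition is_ideal :: "'a::semiring set \<Rightarrow> bool" where
  "is_ideal A \<longleftrightarrow> A \<noteq> {} \<and> (\<forall>a\<in>A. \<forall>b\<in>A. a + b \<in> A)
     \<and> (\<forall>a\<in>A. \<forall>r. r * a \<in> A \<and> a * r \<in> A)"

definition is_congruence :: "('a::semiring) rel \<Rightarrow> bool" where
  "is_congruence \<theta> \<longleftrightarrow> equiv UNIV \<theta> \<and>
     (\<forall>a b c. (a, b) \<in> \<theta> \<longrightarrow> (a + c, b + c) \<in> \<theta> \<and> (a * c, b * c) \<in> \<theta> \<and> (c * a, c * b) \<in> \<theta>)"

definition kappa :: "'a::semiring set \<Rightarrow> 'a rel" where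
  "kappa A = {(x, y). \<exists>a\<in>A. \<exists>b\<in>A. x + a = y + b}"

definition is_k_congruence :: "('a::semiring) rel \<Rightarrow> bool" where
  "is_k_congruence \<theta> \<longleftrightarrow> (\<exists>A. is_ideal A \<and> \<theta> = kappa A)"

definition quot_add :: "('a::semiring) rel \<Rightarrow> 'a set \<Rightarrow> 'a set \<Rightarrow> 'a set" where
  "quot_add \<theta> X Y = \<theta> `` {x + y | x y. x \<in> X \<and> y \<in> Y}"

definition quot_mult :: "('a::semiring) rel \<Rightarrow> 'a set \<Rightarrow> 'a set \<Rightarrow> 'a set" where
  "quot_mult \<theta> X Y = \<theta> `` {x * y | x y. x \<in> X \<and> y \<in> Y}"

definition is_quot_zero :: "('a::semiring) rel \<Rightarrow> 'a set \<Rightarrow> bool" where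
  "is_quot_zero \<theta> Z \<longleftrightarrow> Z \<in> UNIV // \<theta> \<and>
     (\<forall>S \<in> UNIV // \<theta>. quot_add \<theta> Z S = S \<and> quot_mult \<theta> Z S = Z \<and> quot_mult \<theta> S Z = Z)"

end

theory Submission
  imports Defs
begin

text \<open>Because a congruence makes the class operations well defined, a class \<open>[z]\<close> is the
zero of \<open>R/\<theta>\<close> exactly when \<open>z + s \<theta> s\<close>, \<open>z s \<theta> z\<close> and \<open>s z \<theta> z\<close> for all \<open>s\<close>. Such a class is
an ideal, and \<open>x + a = y + b\<close> with \<open>a, b \<in> [z]\<close> gives \<open>x \<theta> x + a = y + b \<theta> y\<close>, so
\<open>\<kappa>([z]) \<subseteq> \<theta>\<close>. Conversely, if \<open>\<theta> = \<kappa>(A)\<close> for an ideal \<open>A\<close>, then any \<open>a \<in> A\<close> satisfies the three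
relations (e.g. \<open>a s + a = a + a s\<close> with \<open>a s, a \<in> A\<close>), so \<open>[a]\<close> is the zero; since
\<open>A \<subseteq> [a]\<close>, monotonicity of \<open>\<kappa>\<close> gives \<open>\<theta> \<subseteq> \<kappa>([a])\<close>.\<close>

lemma congruence_equiv: "is_congruence \<theta> \<Longrightarrow> equiv UNIV \<theta>"
  unfolding is_congruence_def by blast

lemma congruence_refl: "is_congruence \<theta> \<Longrightarrow> (x, x) \<in> \<theta>"
  by (metis congruence_equiv equivE iso_tuple_UNIV_I refl_onD)

lemma congruence_sym: "is_congruence \<theta> \<Longrightarrow> (x, y) \<in> \<theta> \<Longrightarrow> (y, x) \<in> \<theta>"
  by (metis congruence_equiv equivE symD)

lemma congruence_trans:
  "is_congruence \<theta> \<Longrightarrow> (x, y) \<in> \<theta> \<Longrightarrow> (y, z) \<in> \<theta> \<Longrightarrow> (x, z) \<in> \<theta>"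
  by (metis congruence_equiv equivE transD)

lemma congruence_class_eq_iff:
  "is_congruence \<theta> \<Longrightarrow> \<theta> `` {x} = \<theta> `` {y} \<longleftrightarrow> (x, y) \<in> \<theta>"
  by (metis congruence_equiv equiv_class_eq_iff iso_tuple_UNIV_I)

lemma congruence_add:
  assumes cong: "is_congruence \<theta>" and "(x, x') \<in> \<theta>" "(y, y') \<in> \<theta>"
  shows "(x + y, x' + y') \<in> \<theta>"
proof -
  have "(x + y, x' + y) \<in> \<theta>" "(y + x', y' + x') \<in> \<theta>"
    using assms unfolding is_congruence_def by blast+
  then show ?thesis using congruence_trans[OF cong] by (metis add.commute)
qed

lemma congruence_mult:
  assumes cong: "is_congruence \<theta>" and "(x, x') \<in> \<theta>" "(y, y') \<in> \<theta>"
  shows "(x * y, x' * y') \<in> \<theta>"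
proof -
  have "(x * y, x' * y) \<in> \<theta>" "(x' * y, x' * y') \<in> \<theta>"
    using assms unfolding is_congruence_def by blast+
  then show ?thesis using congruence_trans[OF cong] by blast
qed

lemma congruence_Image_compatible_op:
  assumes cong: "is_congruence \<theta>"
    and compat: "\<And>x x' y y'. (x, x') \<in> \<theta> \<Longrightarrow> (y, y') \<in> \<theta> \<Longrightarrow> (f x y, f x' y') \<in> \<theta>"
  shows "\<theta> `` {f x' y' | x' y'. x' \<in> \<theta> `` {x} \<and> y' \<in> \<theta> `` {y}} = \<theta> `` {f x y}"
proof (intro equalityI subsetI)
  fix w assume "w \<in> \<theta> `` {f x' y' | x' y'. x' \<in> \<theta> `` {x} \<and> y' \<in> \<theta> `` {y}}"
  then obtain x' y' where "(x, x') \<in> \<theta>" "(y, y') \<in> \<theta>" "(f x' y', w) \<in> \<theta>" by blast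
  then show "w \<in> \<theta> `` {f x y}" using compat congruence_trans[OF cong] by blast
next
  fix w assume "w \<in> \<theta> `` {f x y}"
  moreover have "x \<in> \<theta> `` {x}" "y \<in> \<theta> `` {y}" using congruence_refl[OF cong] by blast+
  ultimately show "w \<in> \<theta> `` {f x' y' | x' y'. x' \<in> \<theta> `` {x} \<and> y' \<in> \<theta> `` {y}}" by blast
qed

lemma quot_add_classes:
  assumes "is_congruence \<theta>"
  shows "quot_add \<theta> (\<theta> `` {x}) (\<theta> `` {y}) = \<theta> `` {x + y}"
  unfolding quot_add_def using congruence_Image_compatible_op[OF assms congruence_add[OF assms]] .

lemma quot_mult_classes:
  assumes "is_congruence \<theta>"
  shows "quot_mult \<theta> (\<theta> `` {x}) (\<theta> `` {y}) = \<theta> `` {x * y}"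
  unfolding quot_mult_def using congruence_Image_compatible_op[OF assms congruence_mult[OF assms]] .

lemma is_quot_zero_iff:
  assumes cong: "is_congruence \<theta>"
  shows "is_quot_zero \<theta> Z \<longleftrightarrow>
    (\<exists>z. Z = \<theta> `` {z} \<and> (\<forall>s. (z + s, s) \<in> \<theta> \<and> (z * s, z) \<in> \<theta> \<and> (s * z, z) \<in> \<theta>))"
proof -
  have "is_quot_zero \<theta> (\<theta> `` {z}) \<longleftrightarrow>
      (\<forall>s. (z + s, s) \<in> \<theta> \<and> (z * s, z) \<in> \<theta> \<and> (s * z, z) \<in> \<theta>)" for z
  proof -
    have "\<exists>x. (z, x) \<in> \<theta>" using congruence_refl[OF cong] by blast
    then show ?thesis
      unfolding is_quot_zero_def quotient_def
      by (simp add: quot_add_classes[OF cong] quot_mult_classes[OF cong]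
          congruence_class_eq_iff[OF cong])
  qed
  moreover have "is_quot_zero \<theta> Z \<Longrightarrow> \<exists>z. Z = \<theta> `` {z}"
    unfolding is_quot_zero_def by (blast elim: quotientE)
  ultimately show ?thesis by blast
qed

lemma kappa_mono: "A \<subseteq> B \<Longrightarrow> kappa A \<subseteq> kappa B"
  unfolding kappa_def by blast

lemma kappa_quot_zero_subset:
  assumes cong: "is_congruence \<theta>" and zero: "is_quot_zero \<theta> Z"
  shows "kappa Z \<subseteq> \<theta>"
proof
  obtain z where Z: "Z = \<theta> `` {z}" and absorb: "\<And>s. (z + s, s) \<in> \<theta>"
    using zero unfolding is_quot_zero_iff[OF cong] by blast
  have shift: "(x + c, x) \<in> \<theta>" if "c \<in> Z" for x c
  proof -
    have "(c, z) \<in> \<theta>" using that Z by (simp add: congruence_sym[OF cong, of z c])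
    then have "(x + c, x + z) \<in> \<theta>" by (rule congruence_add[OF cong congruence_refl[OF cong]])
    moreover have "(x + z, x) \<in> \<theta>" using absorb[of x] by (simp add: add.commute)
    ultimately show ?thesis by (rule congruence_trans[OF cong])
  qed
  fix p assume "p \<in> kappa Z"
  then obtain x y a b where p: "p = (x, y)" and "a \<in> Z" "b \<in> Z" "x + a = y + b"
    unfolding kappa_def by blast
  then have "(x + a, x) \<in> \<theta>" "(x + a, y) \<in> \<theta>" using shift[of a x] shift[of b y] by auto
  then show "p \<in> \<theta>" using p congruence_sym[OF cong] congruence_trans[OF cong] by metis
qed

lemma ideal_quot_zero:
  assumes cong: "is_congruence \<theta>" and zero: "is_quot_zero \<theta> Z"
  shows "is_ideal Z"
proof -
  obtain z where Z: "Z = \<theta> `` {z}"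
    and absorb: "\<And>s. (z + s, s) \<in> \<theta>" "\<And>s. (z * s, z) \<in> \<theta>" "\<And>s. (s * z, z) \<in> \<theta>"
    using zero unfolding is_quot_zero_iff[OF cong] by blast
  have to_z: "w \<in> Z" if "(w', w) \<in> \<theta>" "(w', z) \<in> \<theta>" for w w'
    using that Z congruence_sym[OF cong, of w' z] congruence_trans[OF cong, of z w' w] by simp
  have "z \<in> Z" using Z congruence_refl[OF cong] by simp
  moreover have "a + b \<in> Z" if "a \<in> Z" "b \<in> Z" for a b
  proof -
    have "(z + z, a + b) \<in> \<theta>" using that Z congruence_add[OF cong] by simp
    with absorb(1)[of z] show ?thesis using to_z by blast
  qed
  moreover have "r * a \<in> Z \<and> a * r \<in> Z" if "a \<in> Z" for a r
  proof -
    have "(z, a) \<in> \<theta>" using that Z by simp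
    then have "(r * z, r * a) \<in> \<theta>" "(z * r, a * r) \<in> \<theta>"
      using congruence_mult[OF cong] congruence_refl[OF cong] by blast+
    with absorb(2,3)[of r] show ?thesis using to_z by blast
  qed
  ultimately show ?thesis unfolding is_ideal_def by blast
qed

lemma k_congruence_quot_zero:
  assumes cong: "is_congruence \<theta>" and ideal: "is_ideal A" and \<theta>: "\<theta> = kappa A"
  obtains Z where "is_quot_zero \<theta> Z" "A \<subseteq> Z"
proof -
  obtain a where a: "a \<in> A" using ideal unfolding is_ideal_def by blast
  have related: "(a, c) \<in> \<theta>" if "c \<in> A" for c
    unfolding \<theta> kappa_def using a that add.commute by blast
  have "(a + s, s) \<in> \<theta>" for s
  proof -
    have "(a + s) + a = s + (a + a)" by (simp add: add_ac)
    moreover have "a + a \<in> A" using ideal a unfolding is_ideal_def by blast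
    ultimately show ?thesis unfolding \<theta> kappa_def using a by blast
  qed
  moreover have "(a * s, a) \<in> \<theta>" "(s * a, a) \<in> \<theta>" for s
    using related ideal a congruence_sym[OF cong] unfolding is_ideal_def by blast+
  ultimately have "is_quot_zero \<theta> (\<theta> `` {a})" unfolding is_quot_zero_iff[OF cong] by blast
  moreover have "A \<subseteq> \<theta> `` {a}" using related by blast
  ultimately show thesis using that by blast
qed

theorem theorem3p3:
  fixes \<theta> :: "('a::semiring) rel"
  assumes card2: "\<exists>x y :: 'a. x \<noteq> y"
    and cong: "is_congruence \<theta>"
  shows "(is_k_congruence \<theta> \<longleftrightarrow> (\<exists>Z. is_quot_zero \<theta> Z \<and> \<theta> \<subseteq> kappa Z))
       \<and> (is_k_congruence \<theta> \<longleftrightarrow> (\<exists>Z. is_quot_zero \<theta> Z \<and> \<theta> = kappa Z))"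
proof -
  have "\<exists>Z. is_quot_zero \<theta> Z \<and> \<theta> \<subseteq> kappa Z" if k: "is_k_congruence \<theta>"
  proof -
    obtain A where A: "is_ideal A" "\<theta> = kappa A"
      using k unfolding is_k_congruence_def by blast
    then obtain Z where "is_quot_zero \<theta> Z" "A \<subseteq> Z" using k_congruence_quot_zero[OF cong] by blast
    with A kappa_mono show ?thesis by blast
  qed
  moreover have "\<theta> = kappa Z" if "is_quot_zero \<theta> Z" "\<theta> \<subseteq> kappa Z" for Z
    using that kappa_quot_zero_subset[OF cong] by blast
  moreover have "is_k_congruence \<theta>" if "is_quot_zero \<theta> Z" "\<theta> = kappa Z" for Z
    using that ideal_quot_zero[OF cong] unfolding is_k_congruence_def by blast
  ultimately show ?thesis by blast
qed

end
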